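(* Let $y:A\to\Delta(B)$ be given (with $A=S$). Then: (a) $U^1(\mu_0,y)\ge U^1(\mu,y)$ for every $\mu\in\mathcal{M}$ if and only if $\sum_{s\in S}u^1(s,y(\cdot\mid s))\ge\sum_{s\in S}u^1(s,y(\cdot\mid\phi(s)))$ for every permutation $\phi$ of $S$. (b) $U^1(\mu_0,y)>U^1(\mu,y)$ for every $\mu\in\mathcal{M}$ with $\mu\neq\mu_0$ if and only if $\sum_{s\in S}u^1(s,y(\cdot\mid s))>\sum_{s\in S}u^1(s,y(\cdot\mid\phi(s)))$ for every permutation $\phi$ of $S$ other than the identity.
   Context: $S$ is a finite set, $A=S$, $B$ a finite set, $u^1:S\times B\to\mathbb{R}$, extended linearly to $u^1(s,\beta)=\sum_b\beta(b)u^1(s,b)$ for $\beta\in\Delta(B)$. $m\in\Delta(S)$ has full support (it is the invariant measure of an irreducible Markov chain on $S$). $\mathcal{M}\subset\Delta(S\times A)$ is the set of distributions on $S\times A$ both of whose marginals equal $m$; $\mu_0\in\mathcal{M}$ is given by $\mu_0(s,s)=m(s)$, $\mu_0(s,a)=0$ for $s\ne a$. For $\mu\in\mathcal{M}$, $U^1(\mu,y)=\sum_{s,a}\mu(s,a)u^1(s,y(\cdot\mid a))$. *)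

theory Defs
  imports "HOL-Analysis.Analysis" "HOL-Combinatorics.Permutations"
begin

definition is_distr :: "('x::finite \<Rightarrow> real) \<Rightarrow> bool" where
  "is_distr p \<longleftrightarrow> (\<forall>x. p x \<ge> 0) \<and> (\<Sum>x\<in>UNIV. p x) = 1"

definition u_ext :: "('s \<Rightarrow> 'b::finite \<Rightarrow> real) \<Rightarrow> 's \<Rightarrow> ('b \<Rightarrow> real) \<Rightarrow> real" where
  "u_ext u s \<beta> = (\<Sum>b\<in>UNIV. \<beta> b * u s b)"

definition couplings :: "('s::finite \<Rightarrow> real) \<Rightarrow> ('s \<times> 's \<Rightarrow> real) set" where
  "couplings m = {\<mu>. is_distr \<mu> \<and> (\<forall>s. (\<Sum>a\<in>UNIV. \<mu> (s, a)) = m s)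
                          \<and> (\<forall>a. (\<Sum>s\<in>UNIV. \<mu> (s, a)) = m a)}"

definition mu0 :: "('s \<Rightarrow> real) \<Rightarrow> ('s \<times> 's \<Rightarrow> real)" where
  "mu0 m = (\<lambda>(s, a). if s = a then m s else 0)"

definition U1 :: "('s \<Rightarrow> 'b::finite \<Rightarrow> real) \<Rightarrow> ('s::finite \<times> 's \<Rightarrow> real) \<Rightarrow> ('s \<Rightarrow> 'b \<Rightarrow> real) \<Rightarrow> real" where
  "U1 u \<mu> y = (\<Sum>(s, a)\<in>UNIV. \<mu> (s, a) * u_ext u s (y a))"

end

theory Submission
  imports Defs "HOL-Combinatorics.Orbits"
begin

text \<open>
  Write \<open>c s a = u(s, y(\<cdot>|a))\<close>. Because the row marginals of a coupling \<open>\<mu>\<close> equal \<open>m\<close>, the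
  difference \<open>U\<^sup>1(\<mu>, y) - U\<^sup>1(\<mu>\<^sub>0, y)\<close> is \<open>\<Sum> \<mu>(s, a) (c s a - c s s)\<close>, which only
  depends on the off-diagonal part of \<open>\<mu>\<close>; since both marginals equal \<open>m\<close>, that part is a
  nonnegative circulation on \<open>S\<close>. Repeatedly peeling off a cycle of its support writes
  every such circulation as a nonnegative combination of the unit flows along the cycles of
  permutations \<open>\<phi>\<close>, whose gain is \<open>\<Sum>\<^sub>s c s (\<phi> s) - \<Sum>\<^sub>s c s s\<close>. Conversely, as \<open>m\<close> has full
  support, a small mass can be moved off the diagonal along any permutation, giving a coupling
  whose gain is a positive multiple of the gain of that permutation.
\<close>

lemma sum_UNIV_prod:
  fixes f :: "'s::finite \<Rightarrow> 't::finite \<Rightarrow> 'c::comm_monoid_add"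
  shows "(\<Sum>(s, a)\<in>UNIV. f s a) = (\<Sum>s\<in>UNIV. \<Sum>a\<in>UNIV. f s a)"
  by (simp add: sum.cartesian_product flip: UNIV_Times_UNIV)

definition circulation :: "('s::finite \<times> 's \<Rightarrow> real) \<Rightarrow> bool" where
  "circulation \<nu> \<longleftrightarrow> (\<forall>q. \<nu> q \<ge> 0) \<and> (\<forall>s. \<nu> (s, s) = 0) \<and>
     (\<forall>s. (\<Sum>a\<in>UNIV. \<nu> (s, a)) = (\<Sum>a\<in>UNIV. \<nu> (a, s)))"

definition cycle_flow :: "('s \<Rightarrow> 's) \<Rightarrow> 's \<times> 's \<Rightarrow> real" where
  "cycle_flow \<phi> = (\<lambda>(s, a). if \<phi> s \<noteq> s \<and> a = \<phi> s then 1 else 0)"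

definition flow_gain :: "('s::finite \<Rightarrow> 's \<Rightarrow> real) \<Rightarrow> ('s \<times> 's \<Rightarrow> real) \<Rightarrow> real" where
  "flow_gain c \<nu> = (\<Sum>(s, a)\<in>UNIV. \<nu> (s, a) * (c s a - c s s))"

lemma flow_gain_add_scaled:
  "flow_gain c (\<lambda>q. \<nu> q + e * \<nu>' q) = flow_gain c \<nu> + e * flow_gain c \<nu>'"
  unfolding flow_gain_def
  by (simp add: distrib_right sum.distrib sum_distrib_left mult.assoc split_def)

lemma flow_gain_scaled: "flow_gain c (\<lambda>q. e * \<nu> q) = e * flow_gain c \<nu>"
  using flow_gain_add_scaled[of c "\<lambda>_. 0" e \<nu>] by (simp add: flow_gain_def)

lemma flow_gain_cycle_flow:
  "flow_gain c (cycle_flow \<phi>) = (\<Sum>s\<in>UNIV. c s (\<phi> s)) - (\<Sum>s\<in>UNIV. c s s)"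
proof -
  have "(\<Sum>a\<in>UNIV. cycle_flow \<phi> (s, a) * (c s a - c s s)) = c s (\<phi> s) - c s s" for s
  proof (cases "\<phi> s = s")
    case False
    then have "(\<Sum>a\<in>UNIV. cycle_flow \<phi> (s, a) * (c s a - c s s))
        = (\<Sum>a\<in>UNIV. if a = \<phi> s then c s a - c s s else 0)"
      by (intro sum.cong) (auto simp: cycle_flow_def)
    then show ?thesis by (simp add: sum.delta)
  qed (simp add: cycle_flow_def)
  then show ?thesis
    by (simp add: flow_gain_def sum_UNIV_prod sum_subtractf)
qed

lemma cycle_flow_out:
  fixes \<phi> :: "'s::finite \<Rightarrow> 's"
  shows "(\<Sum>a\<in>UNIV. cycle_flow \<phi> (s, a)) = (if \<phi> s \<noteq> s then 1 else 0)"
  by (simp add: cycle_flow_def)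

lemma cycle_flow_in:
  assumes "\<phi> permutes (UNIV :: 's::finite set)"
  shows "(\<Sum>a\<in>UNIV. cycle_flow \<phi> (a, s)) = (if \<phi> s \<noteq> s then 1 else 0)"
proof -
  have pre: "(s = \<phi> a) \<longleftrightarrow> (a = inv \<phi> s)" for a
    using permutes_inv_eq[OF assms] by metis
  have moved: "(\<phi> (inv \<phi> s) \<noteq> inv \<phi> s) \<longleftrightarrow> (\<phi> s \<noteq> s)"
    using permutes_inv_eq[OF assms] by metis
  have "(\<Sum>a\<in>UNIV. cycle_flow \<phi> (a, s))
      = (\<Sum>a\<in>UNIV. if a = inv \<phi> s then (if \<phi> a \<noteq> a then 1 else 0) else 0)"
    by (rule sum.cong) (auto simp: cycle_flow_def pre)
  then show ?thesis using moved by simp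
qed

lemma circulation_cycle_flow:
  assumes "\<phi> permutes UNIV" "e \<ge> 0"
  shows "circulation (\<lambda>q. e * cycle_flow \<phi> q)"
  using assms cycle_flow_out[of \<phi>] cycle_flow_in[OF assms(1)]
  by (auto simp: circulation_def cycle_flow_def simp flip: sum_distrib_left)

lemma finite_funpow_periodic:
  fixes f :: "'a::finite \<Rightarrow> 'a"
  obtains i where "(f ^^ i) x \<in> orbit f ((f ^^ i) x)"
proof -
  have "\<not> inj (\<lambda>n. (f ^^ n) x)"
    using finite_imageD[of "\<lambda>n. (f ^^ n) x" UNIV] by auto
  then obtain i j where "i < j" "(f ^^ j) x = (f ^^ i) x"
    unfolding inj_def by (metis linorder_neqE_nat)
  moreover have "(f ^^ (j - i)) ((f ^^ i) x) = (f ^^ j) x"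
    using \<open>i < j\<close> funpow_add[of "j - i" i f] by simp
  ultimately show ?thesis
    using that[of i] unfolding orbit_altdef by (metis (mono_tags) mem_Collect_eq zero_less_diff)
qed

lemma perm_restrict_orbit_permutes:
  assumes "z \<in> orbit f z"
  shows "perm_restrict f (orbit f z) permutes orbit f z"
proof (rule bij_imp_permutes)
  let ?C = "orbit f z"
  have "f ` ?C = ?C"
  proof
    show "f ` ?C \<subseteq> ?C" by (auto intro: orbit.step)
    show "?C \<subseteq> f ` ?C"
      using assms by (auto elim: orbit.cases)
  qed
  moreover have "finite ?C" using finite_orbit[OF assms] .
  ultimately have "bij_betw f ?C ?C"
    by (simp add: bij_betw_def eq_card_imp_inj_on)
  then show "bij_betw (perm_restrict f ?C) ?C ?C"
    by (rule bij_betw_cong[THEN iffD1, rotated]) (simp add: perm_restrict_simps)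
qed (simp add: perm_restrict_simps)

lemma circulation_support_cycle:
  assumes circ: "circulation \<nu>" and nonzero: "\<nu> \<noteq> (\<lambda>_. 0)"
  obtains \<phi> where "\<phi> permutes UNIV" "\<phi> \<noteq> id" "\<And>s. \<phi> s \<noteq> s \<Longrightarrow> \<nu> (s, \<phi> s) > 0"
proof -
  have nonneg: "\<And>q. \<nu> q \<ge> 0" and diag: "\<And>s. \<nu> (s, s) = 0"
    and balance: "\<And>s. (\<Sum>a\<in>UNIV. \<nu> (s, a)) = (\<Sum>a\<in>UNIV. \<nu> (a, s))"
    using circ unfolding circulation_def by auto
  text \<open>Following an edge of positive flow out of a node with positive outflow always
    reaches a node with positive inflow, hence positive outflow; on a finite set this walk
    eventually runs around a cycle.\<close>
  define Q where "Q x \<longleftrightarrow> (\<exists>a. \<nu> (x, a) > 0)" for x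
  define f where "f x = (SOME a. \<nu> (x, a) > 0)" for x
  have f_pos: "\<nu> (x, f x) > 0" if "Q x" for x
    using that unfolding Q_def f_def by (rule someI_ex)
  have Q_f: "Q (f x)" if "Q x" for x
  proof -
    have "0 < \<nu> (x, f x)" using f_pos[OF that] .
    also have "\<dots> \<le> (\<Sum>a\<in>UNIV. \<nu> (a, f x))"
      using nonneg by (intro member_le_sum) auto
    also have "\<dots> = (\<Sum>a\<in>UNIV. \<nu> (f x, a))" by (rule balance[symmetric])
    finally show ?thesis
      unfolding Q_def using nonneg by (meson not_less sum_nonpos)
  qed
  obtain s0 where "Q s0"
    using nonzero nonneg unfolding Q_def by (metis less_eq_real_def old.prod.exhaust)
  then have Q_funpow: "Q ((f ^^ n) s0)" for n
    by (induction n) (simp_all add: Q_f)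
  obtain i where periodic: "(f ^^ i) s0 \<in> orbit f ((f ^^ i) s0)"
    using finite_funpow_periodic .
  define C where "C = orbit f ((f ^^ i) s0)"
  have Q_C: "Q x" if "x \<in> C" for x
    using that unfolding C_def by induction (simp_all add: Q_f Q_funpow)
  define \<phi> where "\<phi> = perm_restrict f C"
  have moves: "\<phi> x \<noteq> x \<longleftrightarrow> x \<in> C" for x
    using f_pos[OF Q_C] diag by (force simp: \<phi>_def perm_restrict_def)
  show ?thesis
  proof
    show "\<phi> permutes UNIV"
      using perm_restrict_orbit_permutes[OF periodic] unfolding \<phi>_def C_def
      by (rule permutes_subset) simp
    show "\<phi> \<noteq> id" using moves[of "(f ^^ i) s0"] periodic by (auto simp: C_def)
    show "\<nu> (s, \<phi> s) > 0" if "\<phi> s \<noteq> s" for s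
      using that moves f_pos Q_C by (simp add: \<phi>_def perm_restrict_simps)
  qed
qed

lemma circulation_peel_cycle:
  fixes \<nu> :: "'s::finite \<times> 's \<Rightarrow> real"
  assumes circ: "circulation \<nu>" and perm: "\<phi> permutes UNIV" and "\<phi> \<noteq> id"
    and support: "\<And>s. \<phi> s \<noteq> s \<Longrightarrow> \<nu> (s, \<phi> s) > 0"
  obtains e \<nu>' where "e > 0" "circulation \<nu>'" "\<nu> = (\<lambda>q. \<nu>' q + e * cycle_flow \<phi> q)"
    "card {q. \<nu>' q \<noteq> 0} < card {q. \<nu> q \<noteq> 0}"
proof -
  define M where "M = {s. \<phi> s \<noteq> s}"
  have "M \<noteq> {}" using \<open>\<phi> \<noteq> id\<close> by (auto simp: M_def fun_eq_iff)
  define e where "e = Min ((\<lambda>s. \<nu> (s, \<phi> s)) ` M)"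
  obtain z where "z \<in> M" "\<nu> (z, \<phi> z) = e"
    using Min_in[of "(\<lambda>s. \<nu> (s, \<phi> s)) ` M"] \<open>M \<noteq> {}\<close> unfolding e_def by fastforce
  then have e_pos: "e > 0" using support by (auto simp: M_def)
  have e_le: "e \<le> \<nu> (s, \<phi> s)" if "\<phi> s \<noteq> s" for s
    using that unfolding e_def M_def by (intro Min_le) auto
  define \<nu>' where "\<nu>' q = \<nu> q - e * cycle_flow \<phi> q" for q
  have "circulation (\<lambda>q. e * cycle_flow \<phi> q)"
    using circulation_cycle_flow[OF perm] e_pos by simp
  then have "circulation \<nu>'"
    using circ e_le
    by (auto simp: circulation_def \<nu>'_def cycle_flow_def sum_subtractf split: if_splits)
  moreover have "{q. \<nu>' q \<noteq> 0} \<subset> {q. \<nu> q \<noteq> 0}"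
  proof
    show "{q. \<nu>' q \<noteq> 0} \<subseteq> {q. \<nu> q \<noteq> 0}"
      using support by (force simp: \<nu>'_def cycle_flow_def split: if_splits)
    have "\<nu>' (z, \<phi> z) = 0" "\<nu> (z, \<phi> z) \<noteq> 0"
      using \<open>z \<in> M\<close> \<open>\<nu> (z, \<phi> z) = e\<close> e_pos by (auto simp: \<nu>'_def cycle_flow_def M_def)
    then show "{q. \<nu>' q \<noteq> 0} \<noteq> {q. \<nu> q \<noteq> 0}" by blast
  qed
  then have "card {q. \<nu>' q \<noteq> 0} < card {q. \<nu> q \<noteq> 0}"
    by (rule psubset_card_mono[rotated]) simp
  ultimately show ?thesis
    using that e_pos by (simp add: \<nu>'_def)
qed

lemma circulation_decompose_cycle:
  assumes "circulation \<nu>" "\<nu> \<noteq> (\<lambda>_. 0)"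
  obtains \<phi> e \<nu>' where "\<phi> permutes UNIV" "\<phi> \<noteq> id" "e > 0" "circulation \<nu>'"
    "\<nu> = (\<lambda>q. \<nu>' q + e * cycle_flow \<phi> q)" "card {q. \<nu>' q \<noteq> 0} < card {q. \<nu> q \<noteq> 0}"
proof -
  obtain \<phi> where "\<phi> permutes UNIV" "\<phi> \<noteq> id" "\<And>s. \<phi> s \<noteq> s \<Longrightarrow> \<nu> (s, \<phi> s) > 0"
    using circulation_support_cycle[OF assms] by blast
  moreover obtain e \<nu>' where "e > 0" "circulation \<nu>'" "\<nu> = (\<lambda>q. \<nu>' q + e * cycle_flow \<phi> q)"
    "card {q. \<nu>' q \<noteq> 0} < card {q. \<nu> q \<noteq> 0}"
    using circulation_peel_cycle[OF assms(1) calculation] .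
  ultimately show ?thesis using that by blast
qed

lemma flow_gain_circulation_nonpos:
  fixes c :: "'s::finite \<Rightarrow> 's \<Rightarrow> real"
  assumes perm_gain: "\<And>\<phi>. \<phi> permutes UNIV \<Longrightarrow> flow_gain c (cycle_flow \<phi>) \<le> 0"
  shows "circulation \<nu> \<Longrightarrow> flow_gain c \<nu> \<le> 0"
proof (induction \<nu> rule: measure_induct_rule[where f = "\<lambda>\<nu>. card {q. \<nu> q \<noteq> 0}"])
  case (less \<nu>)
  show ?case
  proof (cases "\<nu> = (\<lambda>_. 0)")
    case True
    then show ?thesis by (simp add: flow_gain_def)
  next
    case False
    obtain \<phi> e \<nu>' where "\<phi> permutes UNIV" "\<phi> \<noteq> id" "e > 0" "circulation \<nu>'"
      "\<nu> = (\<lambda>q. \<nu>' q + e * cycle_flow \<phi> q)" "card {q. \<nu>' q \<noteq> 0} < card {q. \<nu> q \<noteq> 0}"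
      using circulation_decompose_cycle[OF less.prems False] .
    then show ?thesis
      using less.IH perm_gain by (simp add: flow_gain_add_scaled mult_nonneg_nonpos add_nonpos_nonpos)
  qed
qed

lemma flow_gain_circulation_neg:
  fixes c :: "'s::finite \<Rightarrow> 's \<Rightarrow> real"
  assumes perm_gain: "\<And>\<phi>. \<phi> permutes UNIV \<Longrightarrow> \<phi> \<noteq> id \<Longrightarrow> flow_gain c (cycle_flow \<phi>) < 0"
    and "circulation \<nu>" "\<nu> \<noteq> (\<lambda>_. 0)"
  shows "flow_gain c \<nu> < 0"
proof -
  obtain \<phi> e \<nu>' where "\<phi> permutes UNIV" "\<phi> \<noteq> id" "e > 0" "circulation \<nu>'"
    "\<nu> = (\<lambda>q. \<nu>' q + e * cycle_flow \<phi> q)" "card {q. \<nu>' q \<noteq> 0} < card {q. \<nu> q \<noteq> 0}"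
    using circulation_decompose_cycle[OF assms(2,3)] .
  moreover have "flow_gain c \<nu>' \<le> 0"
  proof (rule flow_gain_circulation_nonpos)
    show "flow_gain c (cycle_flow \<psi>) \<le> 0" if "\<psi> permutes UNIV" for \<psi>
      using perm_gain[OF that] by (cases "\<psi> = id") (simp_all add: flow_gain_cycle_flow)
  qed fact
  ultimately show ?thesis
    using perm_gain by (simp add: flow_gain_add_scaled mult_pos_neg add_nonpos_neg)
qed

definition offdiag :: "('s \<times> 's \<Rightarrow> real) \<Rightarrow> 's \<times> 's \<Rightarrow> real" where
  "offdiag \<mu> = (\<lambda>(s, a). if s = a then 0 else \<mu> (s, a))"

lemma sum_offdiag_out:
  fixes \<mu> :: "'s::finite \<times> 's \<Rightarrow> real"
  shows "(\<Sum>a\<in>UNIV. offdiag \<mu> (s, a)) = (\<Sum>a\<in>UNIV. \<mu> (s, a)) - \<mu> (s, s)"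
  using sum.remove[of UNIV s "\<lambda>a. \<mu> (s, a)"]
  by (simp add: offdiag_def sum.If_cases Diff_eq Compl_eq)

lemma sum_offdiag_in:
  fixes \<mu> :: "'s::finite \<times> 's \<Rightarrow> real"
  shows "(\<Sum>a\<in>UNIV. offdiag \<mu> (a, s)) = (\<Sum>a\<in>UNIV. \<mu> (a, s)) - \<mu> (s, s)"
  using sum.remove[of UNIV s "\<lambda>a. \<mu> (a, s)"]
  by (simp add: offdiag_def sum.If_cases Diff_eq Compl_eq)

lemma circulation_offdiag_coupling:
  assumes "\<mu> \<in> couplings m"
  shows "circulation (offdiag \<mu>)"
  using assms
  by (auto simp: circulation_def couplings_def is_distr_def sum_offdiag_out sum_offdiag_in)
     (auto simp: offdiag_def)

lemma offdiag_coupling_eq_0_iff: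
  assumes "\<mu> \<in> couplings m"
  shows "offdiag \<mu> = (\<lambda>_. 0) \<longleftrightarrow> \<mu> = mu0 m"
proof
  assume zero: "offdiag \<mu> = (\<lambda>_. 0)"
  have "\<mu> (s, s) = m s" for s
    using sum_offdiag_out[of \<mu> s] assms by (simp add: zero couplings_def)
  moreover have "\<mu> (s, a) = 0" if "s \<noteq> a" for s a
    using fun_cong[OF zero, of "(s, a)"] that by (simp add: offdiag_def)
  ultimately show "\<mu> = mu0 m"
    by (auto simp: fun_eq_iff mu0_def)
qed (simp add: offdiag_def mu0_def fun_eq_iff)

lemma payoff_offdiag_split:
  fixes \<mu> :: "'s::finite \<times> 's \<Rightarrow> real"
  assumes row: "\<And>s. (\<Sum>a\<in>UNIV. \<mu> (s, a)) = m s"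
  shows "(\<Sum>(s, a)\<in>UNIV. \<mu> (s, a) * c s a) = (\<Sum>s\<in>UNIV. m s * c s s) + flow_gain c (offdiag \<mu>)"
proof -
  have "flow_gain c (offdiag \<mu>) = (\<Sum>(s, a)\<in>UNIV. \<mu> (s, a) * (c s a - c s s))"
    unfolding flow_gain_def by (intro sum.cong) (auto simp: offdiag_def)
  also have "\<dots> = (\<Sum>(s, a)\<in>UNIV. \<mu> (s, a) * c s a) - (\<Sum>s\<in>UNIV. (\<Sum>a\<in>UNIV. \<mu> (s, a)) * c s s)"
    by (simp add: sum_UNIV_prod right_diff_distrib sum_subtractf sum_distrib_right)
  finally show ?thesis by (simp add: row)
qed

lemma U1_gain:
  assumes "\<mu> \<in> couplings m"
  shows "U1 u \<mu> y - U1 u (mu0 m) y = flow_gain (\<lambda>s a. u_ext u s (y a)) (offdiag \<mu>)"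
proof -
  have "(\<Sum>a\<in>UNIV. mu0 m (s, a)) = m s" for s
    by (simp add: mu0_def)
  then have "U1 u (mu0 m) y = (\<Sum>s\<in>UNIV. m s * u_ext u s (y s))"
    using payoff_offdiag_split[of "mu0 m" m] unfolding U1_def
    by (simp add: offdiag_def mu0_def flow_gain_def cong: if_cong)
  then show ?thesis
    using payoff_offdiag_split[of \<mu> m] assms unfolding U1_def couplings_def by simp
qed

lemma coupling_of_circulation:
  fixes m :: "'s::finite \<Rightarrow> real"
  assumes m: "is_distr m" and circ: "circulation \<nu>"
    and outflow_le: "\<And>s. (\<Sum>a\<in>UNIV. \<nu> (s, a)) \<le> m s"
  defines "\<mu> \<equiv> \<lambda>(s, a). (if s = a then m s - (\<Sum>b\<in>UNIV. \<nu> (s, b)) else 0) + \<nu> (s, a)"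
  shows "\<mu> \<in> couplings m" and "offdiag \<mu> = \<nu>"
proof -
  have diag: "\<nu> (s, s) = 0" and balance: "(\<Sum>a\<in>UNIV. \<nu> (s, a)) = (\<Sum>a\<in>UNIV. \<nu> (a, s))" for s
    using circ by (auto simp: circulation_def)
  have row: "(\<Sum>a\<in>UNIV. \<mu> (s, a)) = m s" for s
    by (simp add: \<mu>_def sum.distrib)
  have col: "(\<Sum>a\<in>UNIV. \<mu> (a, s)) = m s" for s
    by (simp add: \<mu>_def sum.distrib balance)
  have "(\<Sum>q\<in>UNIV. \<mu> q) = 1"
    using m by (simp add: sum_UNIV_prod[of "\<lambda>s a. \<mu> (s, a)", simplified] row is_distr_def)
  moreover have "\<mu> q \<ge> 0" for q
    using circ outflow_le by (auto simp: \<mu>_def circulation_def split: prod.split)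
  ultimately show "\<mu> \<in> couplings m"
    using row col by (simp add: couplings_def is_distr_def)
  show "offdiag \<mu> = \<nu>"
    by (auto simp: offdiag_def \<mu>_def diag fun_eq_iff)
qed

lemma coupling_along_perm:
  fixes m :: "'s::finite \<Rightarrow> real"
  assumes "is_distr m" "\<And>s. m s > 0" "\<phi> permutes UNIV"
  obtains \<mu> e where "\<mu> \<in> couplings m" "e > 0" "offdiag \<mu> = (\<lambda>q. e * cycle_flow \<phi> q)"
proof -
  define e where "e = Min (range m)"
  have "e > 0" using assms(2) Min_in[of "range m"] by (auto simp: e_def)
  then have circ: "circulation (\<lambda>q. e * cycle_flow \<phi> q)"
    using circulation_cycle_flow[OF assms(3)] by simp
  have outflow_le: "(\<Sum>a\<in>UNIV. e * cycle_flow \<phi> (s, a)) \<le> m s" for s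
    using Min_le[of "range m" "m s"] assms(2)[of s]
    by (simp add: e_def cycle_flow_out less_imp_le flip: sum_distrib_left)
  show ?thesis
    using that[of _ e] \<open>e > 0\<close> coupling_of_circulation[OF assms(1) circ outflow_le] by blast
qed

lemma couplings_flow_gain_nonpos_iff:
  fixes c :: "'s::finite \<Rightarrow> 's \<Rightarrow> real"
  assumes "is_distr m" "\<And>s. m s > 0"
  shows "(\<forall>\<mu>\<in>couplings m. flow_gain c (offdiag \<mu>) \<le> 0) \<longleftrightarrow>
    (\<forall>\<phi>. \<phi> permutes UNIV \<longrightarrow> flow_gain c (cycle_flow \<phi>) \<le> 0)"
proof (intro iffI allI impI ballI)
  fix \<phi> :: "'s \<Rightarrow> 's"
  assume "\<forall>\<mu>\<in>couplings m. flow_gain c (offdiag \<mu>) \<le> 0" and "\<phi> permutes UNIV"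
  then show "flow_gain c (cycle_flow \<phi>) \<le> 0"
    by (elim coupling_along_perm[OF assms]) (auto simp: flow_gain_scaled mult_le_0_iff)
next
  fix \<mu> assume "\<forall>\<phi>. \<phi> permutes UNIV \<longrightarrow> flow_gain c (cycle_flow \<phi>) \<le> 0" "\<mu> \<in> couplings m"
  then show "flow_gain c (offdiag \<mu>) \<le> 0"
    by (blast intro: flow_gain_circulation_nonpos circulation_offdiag_coupling)
qed

lemma couplings_flow_gain_neg_iff:
  fixes c :: "'s::finite \<Rightarrow> 's \<Rightarrow> real"
  assumes "is_distr m" "\<And>s. m s > 0"
  shows "(\<forall>\<mu>\<in>couplings m. \<mu> \<noteq> mu0 m \<longrightarrow> flow_gain c (offdiag \<mu>) < 0) \<longleftrightarrow>
    (\<forall>\<phi>. \<phi> permutes UNIV \<and> \<phi> \<noteq> id \<longrightarrow> flow_gain c (cycle_flow \<phi>) < 0)"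
proof (intro iffI allI impI ballI)
  fix \<phi> :: "'s \<Rightarrow> 's"
  assume opt: "\<forall>\<mu>\<in>couplings m. \<mu> \<noteq> mu0 m \<longrightarrow> flow_gain c (offdiag \<mu>) < 0"
    and \<phi>: "\<phi> permutes UNIV \<and> \<phi> \<noteq> id"
  obtain \<mu> e where \<mu>: "\<mu> \<in> couplings m" "e > 0" "offdiag \<mu> = (\<lambda>q. e * cycle_flow \<phi> q)"
    using coupling_along_perm[OF assms] \<phi> by blast
  obtain s where "\<phi> s \<noteq> s" using \<phi> by (auto simp: fun_eq_iff)
  then have "offdiag \<mu> (s, \<phi> s) \<noteq> 0" using \<mu> by (simp add: cycle_flow_def)
  then have "\<mu> \<noteq> mu0 m" using offdiag_coupling_eq_0_iff[OF \<mu>(1)] by auto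
  then show "flow_gain c (cycle_flow \<phi>) < 0"
    using opt \<mu> by (auto simp: flow_gain_scaled mult_less_0_iff)
next
  fix \<mu> assume "\<forall>\<phi>. \<phi> permutes UNIV \<and> \<phi> \<noteq> id \<longrightarrow> flow_gain c (cycle_flow \<phi>) < 0"
    and "\<mu> \<in> couplings m" "\<mu> \<noteq> mu0 m"
  then show "flow_gain c (offdiag \<mu>) < 0"
    using offdiag_coupling_eq_0_iff
    by (blast intro: flow_gain_circulation_neg circulation_offdiag_coupling)
qed

theorem lemma1:
  fixes u :: "'s::finite \<Rightarrow> 'b::finite \<Rightarrow> real"
    and m :: "'s \<Rightarrow> real"
    and y :: "'s \<Rightarrow> 'b \<Rightarrow> real"
  assumes m_distr: "is_distr m"
    and m_full: "\<forall>s. m s > 0"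
    and y_distr: "\<forall>a. is_distr (y a)"
  shows "((\<forall>\<mu>\<in>couplings m. U1 u (mu0 m) y \<ge> U1 u \<mu> y) \<longleftrightarrow>
           (\<forall>\<phi>. \<phi> permutes (UNIV :: 's set) \<longrightarrow>
              (\<Sum>s\<in>UNIV. u_ext u s (y s)) \<ge> (\<Sum>s\<in>UNIV. u_ext u s (y (\<phi> s)))))
       \<and> ((\<forall>\<mu>\<in>couplings m. \<mu> \<noteq> mu0 m \<longrightarrow> U1 u (mu0 m) y > U1 u \<mu> y) \<longleftrightarrow>
           (\<forall>\<phi>. \<phi> permutes (UNIV :: 's set) \<and> \<phi> \<noteq> id \<longrightarrow>
              (\<Sum>s\<in>UNIV. u_ext u s (y s)) > (\<Sum>s\<in>UNIV. u_ext u s (y (\<phi> s)))))"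
proof -
  define c where "c = (\<lambda>s a. u_ext u s (y a))"
  have m_pos: "\<And>s. m s > 0" using m_full ..
  have gain: "U1 u \<mu> y - U1 u (mu0 m) y = flow_gain c (offdiag \<mu>)" if "\<mu> \<in> couplings m" for \<mu>
    using U1_gain[OF that] unfolding c_def .
  have perm_gain: "flow_gain c (cycle_flow \<phi>)
      = (\<Sum>s\<in>UNIV. u_ext u s (y (\<phi> s))) - (\<Sum>s\<in>UNIV. u_ext u s (y s))" for \<phi>
    unfolding c_def by (rule flow_gain_cycle_flow)
  have "(\<forall>\<mu>\<in>couplings m. U1 u (mu0 m) y \<ge> U1 u \<mu> y) \<longleftrightarrow>
      (\<forall>\<mu>\<in>couplings m. flow_gain c (offdiag \<mu>) \<le> 0)"
    using gain by (auto simp flip: gain)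
  moreover have "(\<forall>\<mu>\<in>couplings m. \<mu> \<noteq> mu0 m \<longrightarrow> U1 u (mu0 m) y > U1 u \<mu> y) \<longleftrightarrow>
      (\<forall>\<mu>\<in>couplings m. \<mu> \<noteq> mu0 m \<longrightarrow> flow_gain c (offdiag \<mu>) < 0)"
    using gain by (auto simp flip: gain)
  ultimately show ?thesis
    using couplings_flow_gain_nonpos_iff[OF m_distr m_pos, of c]
      couplings_flow_gain_neg_iff[OF m_distr m_pos, of c]
    by (simp add: perm_gain)
qed

end
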